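(* Let $S\subseteq[d]$ with $|S|=\kappa\ge2$, let $\theta\in\mathbb{R}^d$ satisfy $|\theta_i|\le b$ for all $i$, and let $\sigma$ be a ranking of $S$ drawn from the PL model with parameter $\theta$, with $\sigma^{-1}(i)$ denoting the position of item $i$. Then for any two distinct items $i,i'\in S$ and any $1\le\ell,\ell_1,\ell_2\le\kappa-1$: $$\mathbb{P}_\theta\big[\sigma^{-1}(i)>\ell,\ \sigma^{-1}(i')>\ell\big]\ \ge\ \frac{e^{-4b}(\kappa-\ell)(\kappa-\ell-1)}{\kappa(\kappa-1)}\Big(1-\frac{\ell}{\kappa}\Big)^{2e^{2b}-2},$$ $$\mathbb{P}_\theta\big[\sigma^{-1}(i)=\ell\big]\ \le\ \frac{e^{6b}}{\kappa-\ell},$$ $$\mathbb{P}_\theta\big[\sigma^{-1}(i)=\ell_1,\ \sigma^{-1}(i')=\ell_2\big]\ \le\ \frac{e^{10b}}{(\kappa-\ell_1-1)(\kappa-\ell_2)},$$ where the last right-hand side is interpreted as $+\infty$ if its denominator vanishes.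
   Context: PL model: items $[d]$, parameter $\theta\in\mathbb{R}^d$; when a set $S$ is offered, a ranking $\sigma:[|S|]\to S$ (a bijection from positions to items; position 1 is most preferred) is drawn with probability $\prod_{i=1}^{|S|-1}e^{\theta_{\sigma(i)}}/\sum_{i'=i}^{|S|}e^{\theta_{\sigma(i')}}$. *)

theory Defs
  imports Complex_Main "HOL-Library.FuncSet"
begin

text \<open>Rankings of a finite item set S: bijections from positions {1..|S|} to S
  (position 1 is most preferred), taken extensional so the set is finite.\<close>
definition rankings :: "nat set \<Rightarrow> (nat \<Rightarrow> nat) set" where
  "rankings S = {\<sigma>. \<sigma> \<in> extensional {1..card S} \<and> bij_betw \<sigma> {1..card S} S}"

definition PL_prob :: "(nat \<Rightarrow> real) \<Rightarrow> nat set \<Rightarrow> (nat \<Rightarrow> nat) \<Rightarrow> real" where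
  "PL_prob \<theta> S \<sigma> =
     (\<Prod>i\<in>{1..card S - 1}. exp (\<theta> (\<sigma> i)) / (\<Sum>i'\<in>{i..card S}. exp (\<theta> (\<sigma> i'))))"

definition PL_event :: "(nat \<Rightarrow> real) \<Rightarrow> nat set \<Rightarrow> ((nat \<Rightarrow> nat) \<Rightarrow> bool) \<Rightarrow> real" where
  "PL_event \<theta> S E = (\<Sum>\<sigma>\<in>{\<sigma>\<in>rankings S. E \<sigma>}. PL_prob \<theta> S \<sigma>)"

definition pos :: "nat set \<Rightarrow> (nat \<Rightarrow> nat) \<Rightarrow> nat \<Rightarrow> nat" where
  "pos S \<sigma> i = the_inv_into {1..card S} \<sigma> i"

end

theory Submission
  imports Defs "HOL-Combinatorics.Multiset_Permutations"
begin

text \<open>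
  Identify a ranking of S with the list of its items from the top. With weights w = exp o theta
  the Plackett--Luce probability of an event E factorises through the choice of the top item:
  P_S(E) = sum over x in S of w(x)/w(S) * P_(S - {x})(E(x # -)).
  If all weights on S lie within a factor c = exp(2b) of each other, the top item is a given
  one with probability at most c/|S|, and induction on the position gives the bound c/(|S| - p)
  for position p and c^2/((|S| - p)(|S| - q)) for two positions. Conversely the top item
  avoids two given items with probability at least (|S| - 2)/(|S| - 2 + 2c); the product of
  these factors over the first l positions dominates the closed form of the theorem because
  (1 - 1/K) powr (2c - 2) <= K/(K + 2c - 2), a consequence of ln(1 - x) <= -x.
\<close>

fun pl_list :: "('a \<Rightarrow> real) \<Rightarrow> 'a list \<Rightarrow> real" where
  "pl_list w [] = 1"
| "pl_list w (x # xs) = w x / (w x + sum_list (map w xs)) * pl_list w xs"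

definition pl_list_event :: "('a \<Rightarrow> real) \<Rightarrow> 'a set \<Rightarrow> ('a list \<Rightarrow> bool) \<Rightarrow> real" where
  "pl_list_event w S E = (\<Sum>xs\<in>permutations_of_set S. if E xs then pl_list w xs else 0)"

lemma pl_list_event_cong:
  "(\<And>xs. xs \<in> permutations_of_set S \<Longrightarrow> E xs = E' xs) \<Longrightarrow> pl_list_event w S E = pl_list_event w S E'"
  unfolding pl_list_event_def by (rule sum.cong) auto

lemma pl_list_event_impossible:
  "(\<And>xs. xs \<in> permutations_of_set S \<Longrightarrow> \<not> E xs) \<Longrightarrow> pl_list_event w S E = 0"
  unfolding pl_list_event_def by (rule sum.neutral) auto

lemma pl_list_event_first_choice:
  assumes "finite S" "S \<noteq> {}"
  shows "pl_list_event w S E = (\<Sum>x\<in>S. w x / sum w S * pl_list_event w (S - {x}) (\<lambda>xs. E (x # xs)))"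
proof -
  have "pl_list_event w S E
      = (\<Sum>x\<in>S. \<Sum>xs\<in>(#) x ` permutations_of_set (S - {x}). if E xs then pl_list w xs else 0)"
    unfolding pl_list_event_def permutations_of_set_nonempty[OF assms(2)]
    by (rule sum.UNION_disjoint) (use assms in auto)
  also have "\<dots> = (\<Sum>x\<in>S. \<Sum>xs\<in>permutations_of_set (S - {x}).
                      if E (x # xs) then pl_list w (x # xs) else 0)"
    by (rule sum.cong[OF refl], subst sum.reindex) (auto simp: inj_on_def)
  also have "\<dots> = (\<Sum>x\<in>S. w x / sum w S * pl_list_event w (S - {x}) (\<lambda>xs. E (x # xs)))"
    unfolding pl_list_event_def sum_distrib_left
  proof (intro sum.cong refl)
    fix x xs assume "x \<in> S" "xs \<in> permutations_of_set (S - {x})"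
    then have "w x + sum_list (map w xs) = sum w S"
      using assms(1) by (simp add: sum_list_distinct_conv_sum_set permutations_of_setD sum.remove)
    then show "(if E (x # xs) then pl_list w (x # xs) else 0)
             = w x / sum w S * (if E (x # xs) then pl_list w xs else 0)"
      by simp
  qed
  finally show ?thesis .
qed

lemma nth_permutation_of_set_in:
  "xs \<in> permutations_of_set S \<Longrightarrow> p < card S \<Longrightarrow> xs ! p \<in> S"
  by (metis length_finite_permutations_of_set nth_mem permutations_of_setD(1))

lemma two_le_card:
  "finite S \<Longrightarrow> i \<in> S \<Longrightarrow> i' \<in> S \<Longrightarrow> i \<noteq> i' \<Longrightarrow> 2 \<le> card S"
  using card_mono[of S "{i, i'}"] by auto

fun avoid_pair_bound :: "real \<Rightarrow> real \<Rightarrow> nat \<Rightarrow> real" where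
  "avoid_pair_bound c k 0 = 1"
| "avoid_pair_bound c k (Suc l) = (k - 2) / (k - 2 + 2 * c) * avoid_pair_bound c (k - 1) l"

lemma avoid_pair_bound_nonneg: "0 < c \<Longrightarrow> real l \<le> k - 1 \<Longrightarrow> 0 \<le> avoid_pair_bound c k l"
  by (induction l arbitrary: k) auto

lemma powr_le_one_div:
  fixes a t :: real
  assumes "0 < a" "a \<le> 1" "0 \<le> t"
  shows "a powr t \<le> 1 / (1 + t * (1 - a))"
proof -
  have "t * ln a \<le> - (t * (1 - a))"
    using mult_left_mono[OF ln_le_minus_one[OF assms(1)] assms(3)] by (simp add: algebra_simps)
  then have "a powr t \<le> exp (- (t * (1 - a)))"
    using assms(1) by (simp add: powr_def mult.commute)
  also have "\<dots> = 1 / exp (t * (1 - a))" by (simp add: exp_minus inverse_eq_divide)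
  also have "\<dots> \<le> 1 / (1 + t * (1 - a))"
    using assms by (intro divide_left_mono exp_ge_add_one_self mult_pos_pos add_pos_nonneg) auto
  finally show ?thesis .
qed

lemma avoid_pair_bound_ge:
  fixes c :: real and K l :: nat
  assumes "1 \<le> c" "2 \<le> K" "l \<le> K - 1"
  shows "(real K - real l) * (real K - real l - 1) / (real K * (real K - 1))
           * (1 - real l / real K) powr (2 * c - 2) \<le> avoid_pair_bound c (real K) l"
  using assms(2,3)
proof (induction l arbitrary: K)
  case 0
  then show ?case by simp
next
  case (Suc l)
  show ?case
  proof (cases "K = 2")
    case True
    with Suc.prems show ?thesis by simp
  next
    case False
    with Suc.prems have K: "3 \<le> K" by simp
    define k where "k = real K"
    define t where "t = 2 * c - 2"
    define A where "A = ((k - 1) / k) powr t"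
    define B where "B = (1 - real l / (k - 1)) powr t"
    have k: "3 \<le> k" using K unfolding k_def by simp
    have IH: "(k - 1 - real l) * (k - 1 - real l - 1) / ((k - 1) * (k - 1 - 1)) * B
                \<le> avoid_pair_bound c (k - 1) l"
      using Suc.IH[of "K - 1"] Suc.prems K unfolding k_def B_def t_def by (simp add: of_nat_diff)
    have "0 \<le> B" unfolding B_def by simp
    have l: "real l \<le> k - 2" using Suc.prems unfolding k_def by linarith
    have "1 - real (Suc l) / k = (k - 1) / k * (1 - real l / (k - 1))"
      using k by (simp add: field_simps)
    then have split: "(1 - real (Suc l) / k) powr t = A * B"
      unfolding A_def B_def using k Suc.prems
      by (simp only:) (intro powr_mult; simp add: k_def field_simps)
    have A_le: "A \<le> k / (k - 2 + 2 * c)"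
    proof -
      have "A \<le> 1 / (1 + t * (1 - (k - 1) / k))"
        unfolding A_def t_def using k assms(1) by (intro powr_le_one_div) auto
      also have "\<dots> = k / (k - 2 + 2 * c)"
        using k assms(1) unfolding t_def by (simp add: field_simps)
      finally show ?thesis .
    qed
    have "(k - real (Suc l)) * (k - real (Suc l) - 1) / (k * (k - 1)) * (1 - real (Suc l) / k) powr t
        = (k - 2) / k * A * ((k - 1 - real l) * (k - 1 - real l - 1) / ((k - 1) * (k - 1 - 1)) * B)"
      unfolding split using k by (simp add: divide_simps)
    also have "\<dots> \<le> (k - 2) / k * (k / (k - 2 + 2 * c)) * avoid_pair_bound c (k - 1) l"
      using k l A_le IH \<open>0 \<le> B\<close> assms(1)
      by (intro mult_mono mult_left_mono mult_nonneg_nonneg divide_nonneg_nonneg) auto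
    also have "\<dots> = avoid_pair_bound c k (Suc l)"
      using k by simp
    finally show ?thesis unfolding k_def t_def .
  qed
qed

locale positive_weights =
  fixes w :: "'a \<Rightarrow> real"
  assumes weight_pos: "0 < w x"
begin

lemma sum_weights_pos: "finite S \<Longrightarrow> S \<noteq> {} \<Longrightarrow> 0 < sum w S"
  by (intro sum_pos weight_pos)

lemma choice_prob_nonneg: "0 \<le> w x / sum w S"
  by (intro divide_nonneg_nonneg sum_nonneg less_imp_le weight_pos)

lemma pl_list_nonneg: "0 \<le> pl_list w xs"
proof (induction xs)
  case (Cons x xs)
  have "0 \<le> sum_list (map w xs)" by (intro sum_list_nonneg) (auto intro: less_imp_le weight_pos)
  then have "0 \<le> w x / (w x + sum_list (map w xs))"
    using weight_pos[of x] by (intro divide_nonneg_nonneg) auto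
  then show ?case unfolding pl_list.simps using Cons.IH by (rule mult_nonneg_nonneg)
qed simp

lemma pl_list_event_nonneg: "0 \<le> pl_list_event w S E"
  unfolding pl_list_event_def by (auto intro!: sum_nonneg pl_list_nonneg)

lemma pl_list_event_const:
  "finite S \<Longrightarrow> pl_list_event w S (\<lambda>_. P) = (if P then 1 else 0)"
proof (induction "card S" arbitrary: S)
  case 0
  then show ?case by (simp add: pl_list_event_def)
next
  case (Suc n)
  then have "S \<noteq> {}" by auto
  with Suc show ?case
    using sum_weights_pos[of S]
    by (simp add: pl_list_event_first_choice sum_divide_distrib[symmetric] pl_list_event_impossible)
qed

lemma pl_list_event_le_if_tails_le:
  assumes "finite S" "S \<noteq> {}" "0 \<le> B"
    and "\<And>x. x \<in> S \<Longrightarrow> pl_list_event w (S - {x}) (\<lambda>xs. E (x # xs)) \<le> B"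
  shows "pl_list_event w S E \<le> B"
proof -
  have "pl_list_event w S E \<le> (\<Sum>x\<in>S. w x / sum w S * B)"
    unfolding pl_list_event_first_choice[OF assms(1,2)]
    by (intro sum_mono mult_left_mono assms(4) choice_prob_nonneg)
  also have "\<dots> = B"
    using sum_weights_pos[OF assms(1,2)] by (simp add: sum_distrib_right[symmetric]
        sum_divide_distrib[symmetric])
  finally show ?thesis .
qed

lemma pl_list_event_ge_if_tails_ge:
  assumes "finite S" "S \<noteq> {}" "0 \<le> B" "T \<subseteq> S"
    and "\<And>x. x \<in> T \<Longrightarrow> B \<le> pl_list_event w (S - {x}) (\<lambda>xs. E (x # xs))"
  shows "sum w T / sum w S * B \<le> pl_list_event w S E"
proof -
  have "sum w T / sum w S * B = (\<Sum>x\<in>T. w x / sum w S * B)"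
    by (simp add: sum_distrib_right sum_divide_distrib)
  also have "\<dots> \<le> (\<Sum>x\<in>T. w x / sum w S * pl_list_event w (S - {x}) (\<lambda>xs. E (x # xs)))"
    by (intro sum_mono mult_left_mono assms(5) choice_prob_nonneg)
  also have "\<dots> \<le> (\<Sum>x\<in>S. w x / sum w S * pl_list_event w (S - {x}) (\<lambda>xs. E (x # xs)))"
    by (intro sum_mono2 assms(1,4) mult_nonneg_nonneg choice_prob_nonneg pl_list_event_nonneg)
  finally show ?thesis
    unfolding pl_list_event_first_choice[OF assms(1,2)] .
qed

lemma pl_list_event_forced_head:
  assumes "finite S" "a \<in> S"
    and "\<And>x xs. x \<in> S \<Longrightarrow> x \<noteq> a \<Longrightarrow> \<not> E (x # xs)"
  shows "pl_list_event w S E = w a / sum w S * pl_list_event w (S - {a}) (\<lambda>xs. E (a # xs))"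
proof -
  have "pl_list_event w S E = (\<Sum>x\<in>S. w x / sum w S * pl_list_event w (S - {x}) (\<lambda>xs. E (x # xs)))"
    using assms(1,2) by (intro pl_list_event_first_choice) auto
  also have "\<dots> = w a / sum w S * pl_list_event w (S - {a}) (\<lambda>xs. E (a # xs))"
    using assms by (subst sum.remove[OF assms(1,2)]) (simp add: pl_list_event_impossible)
  finally show ?thesis .
qed

lemma weight_ratio_ge_one:
  "i \<in> S \<Longrightarrow> \<forall>x\<in>S. \<forall>y\<in>S. w x \<le> c * w y \<Longrightarrow> 1 \<le> c"
  using weight_pos[of i] by force

lemma choice_prob_le:
  assumes "finite S" "i \<in> S" "\<forall>x\<in>S. \<forall>y\<in>S. w x \<le> c * w y"
  shows "w i / sum w S \<le> c / real (card S)"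
proof -
  have "real (card S) * w i = (\<Sum>y\<in>S. w i)" by simp
  also have "\<dots> \<le> (\<Sum>y\<in>S. c * w y)" using assms(2,3) by (intro sum_mono) auto
  finally have "real (card S) * w i \<le> c * sum w S" by (simp add: sum_distrib_left)
  moreover have "0 < sum w S" "0 < card S"
    using assms(1,2) sum_weights_pos card_gt_0_iff by blast+
  ultimately show ?thesis by (simp add: divide_simps mult.commute)
qed

lemma pl_list_event_nth_le:
  assumes "finite S" "i \<in> S" "p < card S" "\<forall>x\<in>S. \<forall>y\<in>S. w x \<le> c * w y"
  shows "pl_list_event w S (\<lambda>xs. xs ! p = i) \<le> c / (real (card S) - real p)"
  using assms
proof (induction p arbitrary: S)
  case 0
  have "pl_list_event w S (\<lambda>xs. xs ! 0 = i)
      = (\<Sum>x\<in>S. w x / sum w S * pl_list_event w (S - {x}) (\<lambda>_. x = i))"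
    using 0 by (subst pl_list_event_first_choice) auto
  also have "\<dots> = (\<Sum>x\<in>S. if x = i then w x / sum w S else 0)"
    using 0(1) by (intro sum.cong refl) (simp add: pl_list_event_const)
  also have "\<dots> = w i / sum w S" using 0 by (simp only: sum.delta if_True)
  finally show ?case using choice_prob_le[OF 0(1,2,4)] by simp
next
  case (Suc p)
  have "1 \<le> c" using weight_ratio_ge_one Suc.prems(2,4) .
  show ?case
  proof (rule pl_list_event_le_if_tails_le)
    fix x assume x: "x \<in> S"
    show "pl_list_event w (S - {x}) (\<lambda>xs. (x # xs) ! Suc p = i) \<le> c / (real (card S) - real (Suc p))"
    proof (cases "x = i")
      case True
      have "pl_list_event w (S - {x}) (\<lambda>xs. (x # xs) ! Suc p = i) = 0"
      proof (rule pl_list_event_impossible)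
        fix xs assume "xs \<in> permutations_of_set (S - {x})"
        moreover have "p < card (S - {x})" using Suc.prems x by auto
        ultimately have "xs ! p \<in> S - {x}" by (rule nth_permutation_of_set_in)
        with True show "\<not> (x # xs) ! Suc p = i" by auto
      qed
      with \<open>1 \<le> c\<close> Suc.prems(3) show ?thesis by simp
    next
      case False
      have "pl_list_event w (S - {x}) (\<lambda>xs. xs ! p = i) \<le> c / (real (card (S - {x})) - real p)"
        using False Suc.prems x by (intro Suc.IH) auto
      with x Suc.prems show ?thesis by (simp add: of_nat_diff diff_diff_eq)
    qed
  qed (use Suc.prems \<open>1 \<le> c\<close> in auto)
qed

lemma pl_list_event_head_nth_le:
  assumes "finite S" "i \<in> S" "i' \<in> S" "i \<noteq> i'" "q < card S" "\<forall>x\<in>S. \<forall>y\<in>S. w x \<le> c * w y"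
  shows "pl_list_event w S (\<lambda>xs. xs ! 0 = i \<and> xs ! q = i')
           \<le> c * c / (real (card S) * (real (card S) - real q))"
proof (cases q)
  case 0
  with assms show ?thesis
    by (simp add: pl_list_event_impossible weight_ratio_ge_one[OF assms(2,6)])
next
  case (Suc q')
  have "pl_list_event w S (\<lambda>xs. xs ! 0 = i \<and> xs ! q = i')
      = w i / sum w S * pl_list_event w (S - {i}) (\<lambda>xs. xs ! q' = i')"
    using assms Suc by (subst pl_list_event_forced_head[of _ i]) auto
  also have "\<dots> \<le> c / real (card S) * (c / (real (card (S - {i})) - real q'))"
  proof (rule mult_mono)
    show "w i / sum w S \<le> c / real (card S)" using choice_prob_le assms(1,2,6) .
    show "pl_list_event w (S - {i}) (\<lambda>xs. xs ! q' = i') \<le> c / (real (card (S - {i})) - real q')"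
      using assms Suc by (intro pl_list_event_nth_le) auto
    show "0 \<le> c / real (card S)" using weight_ratio_ge_one[OF assms(2,6)] by simp
  qed (rule pl_list_event_nonneg)
  also have "\<dots> = c * c / (real (card S) * (real (card S) - real q))"
    using assms Suc by (simp add: of_nat_diff)
  finally show ?thesis .
qed

lemma pl_list_event_nth_pair_le:
  assumes "finite S" "i \<in> S" "i' \<in> S" "i \<noteq> i'" "p < card S" "q < card S"
    and "\<forall>x\<in>S. \<forall>y\<in>S. w x \<le> c * w y"
  shows "pl_list_event w S (\<lambda>xs. xs ! p = i \<and> xs ! q = i')
           \<le> c * c / ((real (card S) - real p) * (real (card S) - real q))"
  using assms
proof (induction p arbitrary: q S)
  case 0
  then show ?case using pl_list_event_head_nth_le by simp
next
  case (Suc p)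
  show ?case
  proof (cases q)
    case 0
    have "pl_list_event w S (\<lambda>xs. xs ! Suc p = i \<and> xs ! q = i')
        = pl_list_event w S (\<lambda>xs. xs ! 0 = i' \<and> xs ! Suc p = i)"
      using 0 by (intro pl_list_event_cong) auto
    also have "\<dots> \<le> c * c / (real (card S) * (real (card S) - real (Suc p)))"
      using Suc.prems by (intro pl_list_event_head_nth_le) auto
    finally show ?thesis using 0 by (simp add: mult.commute)
  next
    case (Suc q')
    show ?thesis
    proof (rule pl_list_event_le_if_tails_le)
      fix x assume x: "x \<in> S"
      show "pl_list_event w (S - {x}) (\<lambda>xs. (x # xs) ! Suc p = i \<and> (x # xs) ! q = i')
              \<le> c * c / ((real (card S) - real (Suc p)) * (real (card S) - real q))"
      proof (cases "x = i \<or> x = i'")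
        case True
        have "pl_list_event w (S - {x}) (\<lambda>xs. (x # xs) ! Suc p = i \<and> (x # xs) ! q = i') = 0"
        proof (rule pl_list_event_impossible)
          fix xs assume "xs \<in> permutations_of_set (S - {x})"
          moreover have "p < card (S - {x})" "q' < card (S - {x})"
            using Suc.prems \<open>q = Suc q'\<close> x by auto
          ultimately have "xs ! p \<in> S - {x}" "xs ! q' \<in> S - {x}"
            by (meson nth_permutation_of_set_in)+
          with True \<open>q = Suc q'\<close> show "\<not> ((x # xs) ! Suc p = i \<and> (x # xs) ! q = i')" by auto
        qed
        then show ?thesis
          using \<open>Suc p < card S\<close> \<open>q < card S\<close> by simp
      next
        case False
        have "pl_list_event w (S - {x}) (\<lambda>xs. xs ! p = i \<and> xs ! q' = i')
            \<le> c * c / ((real (card (S - {x})) - real p) * (real (card (S - {x})) - real q'))"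
          using False Suc.prems x \<open>q = Suc q'\<close> by (intro Suc.IH) auto
        with x Suc.prems \<open>q = Suc q'\<close> show ?thesis by (simp add: of_nat_diff diff_diff_eq)
      qed
    qed (use Suc.prems in auto)
  qed
qed

lemma choice_avoids_pair_prob_ge:
  assumes "finite S" "i \<in> S" "i' \<in> S" "i \<noteq> i'" "\<forall>x\<in>S. \<forall>y\<in>S. w x \<le> c * w y"
  shows "(real (card S) - 2) / (real (card S) - 2 + 2 * c) \<le> sum w (S - {i, i'}) / sum w S"
proof -
  define T where "T = S - {i, i'}"
  have sum_S: "sum w S = sum w T + (w i + w i')"
    using assms(1-4) unfolding T_def by (simp add: sum.subset_diff[of "{i, i'}" S])
  have card_T: "real (card T) = real (card S) - 2"
    using assms(1-4) two_le_card[OF assms(1-4)] unfolding T_def by (simp add: card_Diff_subset of_nat_diff)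
  have "real (card T) * (w i + w i') = (\<Sum>y\<in>T. w i + w i')" by simp
  also have "\<dots> \<le> (\<Sum>y\<in>T. 2 * c * w y)"
  proof (rule sum_mono)
    fix y assume "y \<in> T"
    with assms(2,3,5) have "w i \<le> c * w y" "w i' \<le> c * w y" unfolding T_def by auto
    then show "w i + w i' \<le> 2 * c * w y" by simp
  qed
  finally have key: "real (card T) * (w i + w i') \<le> 2 * c * sum w T"
    by (simp add: sum_distrib_left)
  have "1 \<le> c" using weight_ratio_ge_one assms(2,5) .
  moreover have "0 \<le> sum w T" by (intro sum_nonneg less_imp_le weight_pos)
  moreover have "0 < w i + w i'" using weight_pos[of i] weight_pos[of i'] by simp
  ultimately show ?thesis
    using key card_T sum_S unfolding T_def[symmetric]
    by (simp add: divide_simps algebra_simps)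
qed

lemma pl_list_event_avoid_pair_ge:
  assumes "finite S" "i \<in> S" "i' \<in> S" "i \<noteq> i'" "l \<le> card S - 1"
    and "\<forall>x\<in>S. \<forall>y\<in>S. w x \<le> c * w y"
  shows "avoid_pair_bound c (real (card S)) l
           \<le> pl_list_event w S (\<lambda>xs. i \<notin> set (take l xs) \<and> i' \<notin> set (take l xs))"
  using assms
proof (induction l arbitrary: S)
  case 0
  then show ?case by (simp add: pl_list_event_const)
next
  case (Suc l)
  have "1 \<le> c" using weight_ratio_ge_one Suc.prems(2,6) .
  have card_S: "2 \<le> card S" using two_le_card Suc.prems(1-4) .
  let ?B = "avoid_pair_bound c (real (card S) - 1) l"
  have "(real (card S) - 2) / (real (card S) - 2 + 2 * c) * ?B \<le> sum w (S - {i, i'}) / sum w S * ?B"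
    using Suc.prems card_S \<open>1 \<le> c\<close>
    by (intro mult_right_mono choice_avoids_pair_prob_ge avoid_pair_bound_nonneg) auto
  also have "\<dots> \<le> pl_list_event w S (\<lambda>xs. i \<notin> set (take (Suc l) xs) \<and> i' \<notin> set (take (Suc l) xs))"
  proof (rule pl_list_event_ge_if_tails_ge)
    fix x assume x: "x \<in> S - {i, i'}"
    have "?B = avoid_pair_bound c (real (card (S - {x}))) l"
      using x Suc.prems by (simp add: of_nat_diff)
    also have "\<dots> \<le> pl_list_event w (S - {x}) (\<lambda>xs. i \<notin> set (take l xs) \<and> i' \<notin> set (take l xs))"
      using x Suc.prems by (intro Suc.IH) auto
    also have "\<dots> = pl_list_event w (S - {x})
                      (\<lambda>xs. i \<notin> set (take (Suc l) (x # xs)) \<and> i' \<notin> set (take (Suc l) (x # xs)))"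
      using x by (intro pl_list_event_cong) auto
    finally show "?B \<le> \<dots>" .
  qed (use Suc.prems card_S \<open>1 \<le> c\<close> in \<open>auto intro: avoid_pair_bound_nonneg\<close>)
  finally show ?case by simp
qed

end

lemma pl_list_eq_prod:
  "pl_list w xs = (\<Prod>n<length xs. w (xs ! n) / (\<Sum>j=n..<length xs. w (xs ! j)))"
proof (induction xs)
  case (Cons x xs)
  have "(\<Sum>j=0..<Suc (length xs). w ((x # xs) ! j)) = w x + sum_list (map w xs)"
    by (simp add: atLeast0LessThan sum.lessThan_Suc_shift sum_list_sum_nth del: sum.lessThan_Suc)
  moreover have "(\<Sum>j=Suc n..<Suc (length xs). w ((x # xs) ! j)) = (\<Sum>j=n..<length xs. w (xs ! j))" for n
    by (simp only: sum.atLeast_Suc_lessThan_Suc_shift) (simp add: comp_def)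
  ultimately have "(\<Prod>n<Suc (length xs). w ((x # xs) ! n) / (\<Sum>j=n..<Suc (length xs). w ((x # xs) ! j)))
      = w x / (w x + sum_list (map w xs)) * (\<Prod>n<length xs. w (xs ! n) / (\<Sum>j=n..<length xs. w (xs ! j)))"
    by (simp only: prod.lessThan_Suc_shift nth_Cons_0 nth_Cons_Suc)
  with Cons.IH show ?case by (simp only: pl_list.simps length_Cons)
qed simp

definition ranking_of_list :: "nat \<Rightarrow> 'a list \<Rightarrow> nat \<Rightarrow> 'a" where
  "ranking_of_list n xs = (\<lambda>k. if k \<in> {1..n} then xs ! (k - 1) else undefined)"

lemma ranking_of_list_in_rankings:
  assumes "xs \<in> permutations_of_set S"
  shows "ranking_of_list (card S) xs \<in> rankings S"
proof -
  have xs: "distinct xs" "set xs = S" "length xs = card S"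
    using assms by (auto dest: permutations_of_setD length_finite_permutations_of_set)
  have "bij_betw (\<lambda>k. k - 1) {1..card S} {..<card S}"
    by (rule bij_betw_byWitness[where f' = Suc]) auto
  then have "bij_betw ((!) xs \<circ> (\<lambda>k. k - 1)) {1..card S} S"
    using xs by (intro bij_betw_trans bij_betw_nth) auto
  then have "bij_betw (ranking_of_list (card S) xs) {1..card S} S"
    by (rule bij_betw_cong[THEN iffD1, rotated]) (simp add: ranking_of_list_def)
  then show ?thesis
    unfolding rankings_def by (simp add: ranking_of_list_def extensional_def)
qed

lemma list_of_ranking_in_permutations:
  assumes "\<sigma> \<in> rankings S"
  shows "map \<sigma> [1..<Suc (card S)] \<in> permutations_of_set S"
proof -
  have "bij_betw \<sigma> {1..card S} S" using assms unfolding rankings_def by simp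
  moreover have "set [1..<Suc (card S)] = {1..card S}" by auto
  ultimately show ?thesis
    by (intro permutations_of_setI) (auto simp: bij_betw_def distinct_map simp del: upt_Suc)
qed

lemma bij_betw_ranking_of_list:
  "bij_betw (ranking_of_list (card S)) (permutations_of_set S) (rankings S)"
proof (rule bij_betw_byWitness[where f' = "\<lambda>\<sigma>. map \<sigma> [1..<Suc (card S)]"])
  show "\<forall>xs\<in>permutations_of_set S. map (ranking_of_list (card S) xs) [1..<Suc (card S)] = xs"
    by (auto intro!: nth_equalityI simp: length_finite_permutations_of_set ranking_of_list_def
        nth_map_upt simp del: upt_Suc)
  show "\<forall>\<sigma>\<in>rankings S. ranking_of_list (card S) (map \<sigma> [1..<Suc (card S)]) = \<sigma>"
    by (auto intro!: ext simp: rankings_def ranking_of_list_def extensional_def nth_map_upt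
        simp del: upt_Suc)
  show "ranking_of_list (card S) ` permutations_of_set S \<subseteq> rankings S"
    using ranking_of_list_in_rankings by blast
  show "(\<lambda>\<sigma>. map \<sigma> [1..<Suc (card S)]) ` rankings S \<subseteq> permutations_of_set S"
    using list_of_ranking_in_permutations by blast
qed

lemma PL_prob_ranking_of_list:
  assumes "xs \<in> permutations_of_set S"
  shows "PL_prob \<theta> S (ranking_of_list (card S) xs) = pl_list (\<lambda>j. exp (\<theta> j)) xs"
proof -
  define n where "n = card S"
  define g where "g m = exp (\<theta> (xs ! m)) / (\<Sum>j=m..<n. exp (\<theta> (xs ! j)))" for m
  have "PL_prob \<theta> S (ranking_of_list n xs) = (\<Prod>m<n - 1. g m)"
    unfolding PL_prob_def n_def[symmetric] prod.atLeast1_atMost_eq[unfolded One_nat_def[symmetric]]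
  proof (intro prod.cong refl)
    fix m assume "m \<in> {..<n - 1}"
    then have "(\<Sum>i\<in>{Suc m..n}. exp (\<theta> (ranking_of_list n xs i))) = (\<Sum>j=m..<n. exp (\<theta> (xs ! j)))"
      by (subst atLeastLessThanSuc_atLeastAtMost[symmetric], subst sum.atLeast_Suc_lessThan_Suc_shift)
        (auto simp: ranking_of_list_def intro!: sum.cong)
    with \<open>m \<in> {..<n - 1}\<close> show "exp (\<theta> (ranking_of_list n xs (Suc m)))
        / (\<Sum>i\<in>{Suc m..n}. exp (\<theta> (ranking_of_list n xs i))) = g m"
      by (simp add: g_def ranking_of_list_def)
  qed
  also have "\<dots> = (\<Prod>m<n. g m)"
    by (cases n) (simp_all add: g_def)
  also have "\<dots> = pl_list (\<lambda>j. exp (\<theta> j)) xs"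
    using assms by (simp add: pl_list_eq_prod g_def n_def length_finite_permutations_of_set)
  finally show ?thesis unfolding n_def .
qed

lemma PL_event_eq_pl_list_event:
  "PL_event \<theta> S E = pl_list_event (\<lambda>j. exp (\<theta> j)) S (\<lambda>xs. E (ranking_of_list (card S) xs))"
proof -
  have "PL_event \<theta> S E = (\<Sum>\<sigma>\<in>rankings S. if E \<sigma> then PL_prob \<theta> S \<sigma> else 0)"
    unfolding PL_event_def
    by (rule sum.inter_filter) (metis bij_betw_finite bij_betw_ranking_of_list finite_permutations_of_set)
  also have "\<dots> = (\<Sum>xs\<in>permutations_of_set S. if E (ranking_of_list (card S) xs)
                     then PL_prob \<theta> S (ranking_of_list (card S) xs) else 0)"
    by (rule sum.reindex_bij_betw[OF bij_betw_ranking_of_list, symmetric])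
  also have "\<dots> = pl_list_event (\<lambda>j. exp (\<theta> j)) S (\<lambda>xs. E (ranking_of_list (card S) xs))"
    unfolding pl_list_event_def by (intro sum.cong refl) (simp add: PL_prob_ranking_of_list)
  finally show ?thesis .
qed

lemma pos_eq_iff:
  assumes "\<sigma> \<in> rankings S" "i \<in> S" "n \<in> {1..card S}"
  shows "pos S \<sigma> i = n \<longleftrightarrow> \<sigma> n = i"
proof -
  have "inj_on \<sigma> {1..card S}" "\<sigma> ` {1..card S} = S"
    using assms(1) unfolding rankings_def bij_betw_def by auto
  then show ?thesis
    unfolding pos_def using assms(2,3) by (metis f_the_inv_into_f the_inv_into_f_eq)
qed

lemma pos_ranking_of_list_eq_iff:
  assumes "xs \<in> permutations_of_set S" "i \<in> S" "n \<in> {1..card S}"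
  shows "pos S (ranking_of_list (card S) xs) i = n \<longleftrightarrow> xs ! (n - 1) = i"
  using pos_eq_iff[OF ranking_of_list_in_rankings[OF assms(1)] assms(2,3)] assms(3)
  by (simp add: ranking_of_list_def)

lemma less_pos_ranking_of_list_iff:
  assumes "xs \<in> permutations_of_set S" "i \<in> S"
  shows "l < pos S (ranking_of_list (card S) xs) i \<longleftrightarrow> i \<notin> set (take l xs)"
proof -
  have xs: "distinct xs" "set xs = S" "length xs = card S"
    using assms(1) by (auto dest: permutations_of_setD length_finite_permutations_of_set)
  then obtain m where m: "m < card S" "xs ! m = i"
    using assms(2) by (metis in_set_conv_nth)
  then have "pos S (ranking_of_list (card S) xs) i = Suc m"
    using assms by (subst pos_ranking_of_list_eq_iff) auto
  moreover have "i \<in> set (take l xs) \<longleftrightarrow> m < l"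
    using xs m by (auto simp: in_set_conv_nth nth_eq_iff_index_eq)
  ultimately show ?thesis by auto
qed

lemma positive_weights_exp: "positive_weights (\<lambda>j. exp (\<theta> j))"
  by unfold_locales simp

lemma exp_ratio_le_if_abs_le:
  fixes \<theta> :: "'a \<Rightarrow> real"
  assumes "\<forall>j\<in>S. \<bar>\<theta> j\<bar> \<le> b"
  shows "\<forall>x\<in>S. \<forall>y\<in>S. exp (\<theta> x) \<le> exp (2 * b) * exp (\<theta> y)"
proof (intro ballI)
  fix x y assume "x \<in> S" "y \<in> S"
  with assms have "\<bar>\<theta> x\<bar> \<le> b" "\<bar>\<theta> y\<bar> \<le> b" by auto
  then show "exp (\<theta> x) \<le> exp (2 * b) * exp (\<theta> y)" by (simp add: exp_add[symmetric])
qed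

lemma PL_event_pos_eq_le:
  assumes "finite S" "i \<in> S" "l \<in> {1..card S}" "\<forall>x\<in>S. \<forall>y\<in>S. exp (\<theta> x) \<le> c * exp (\<theta> y)"
  shows "PL_event \<theta> S (\<lambda>\<sigma>. pos S \<sigma> i = l) \<le> c / (real (card S) - real l + 1)"
proof -
  have "PL_event \<theta> S (\<lambda>\<sigma>. pos S \<sigma> i = l) = pl_list_event (\<lambda>j. exp (\<theta> j)) S (\<lambda>xs. xs ! (l - 1) = i)"
    unfolding PL_event_eq_pl_list_event using assms(2,3)
    by (intro pl_list_event_cong) (simp add: pos_ranking_of_list_eq_iff)
  also have "\<dots> \<le> c / (real (card S) - real (l - 1))"
    using assms by (intro positive_weights.pl_list_event_nth_le[OF positive_weights_exp]) auto
  finally show ?thesis using assms(3) by (simp add: of_nat_diff algebra_simps)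
qed

lemma PL_event_pos_eq_pair_le:
  assumes "finite S" "i \<in> S" "i' \<in> S" "i \<noteq> i'" "l1 \<in> {1..card S}" "l2 \<in> {1..card S}"
    and "\<forall>x\<in>S. \<forall>y\<in>S. exp (\<theta> x) \<le> c * exp (\<theta> y)"
  shows "PL_event \<theta> S (\<lambda>\<sigma>. pos S \<sigma> i = l1 \<and> pos S \<sigma> i' = l2)
           \<le> c * c / ((real (card S) - real l1 + 1) * (real (card S) - real l2 + 1))"
proof -
  have "PL_event \<theta> S (\<lambda>\<sigma>. pos S \<sigma> i = l1 \<and> pos S \<sigma> i' = l2)
      = pl_list_event (\<lambda>j. exp (\<theta> j)) S (\<lambda>xs. xs ! (l1 - 1) = i \<and> xs ! (l2 - 1) = i')"
    unfolding PL_event_eq_pl_list_event using assms(2,3,5,6)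
    by (intro pl_list_event_cong) (simp add: pos_ranking_of_list_eq_iff)
  also have "\<dots> \<le> c * c / ((real (card S) - real (l1 - 1)) * (real (card S) - real (l2 - 1)))"
    using assms by (intro positive_weights.pl_list_event_nth_pair_le[OF positive_weights_exp]) auto
  finally show ?thesis using assms(5,6) by (simp add: of_nat_diff algebra_simps)
qed

lemma PL_event_pos_pair_gt_ge:
  assumes "finite S" "i \<in> S" "i' \<in> S" "i \<noteq> i'" "l \<le> card S - 1"
    and "\<forall>x\<in>S. \<forall>y\<in>S. exp (\<theta> x) \<le> c * exp (\<theta> y)"
  shows "avoid_pair_bound c (real (card S)) l \<le> PL_event \<theta> S (\<lambda>\<sigma>. l < pos S \<sigma> i \<and> l < pos S \<sigma> i')"
proof -
  have "PL_event \<theta> S (\<lambda>\<sigma>. l < pos S \<sigma> i \<and> l < pos S \<sigma> i')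
      = pl_list_event (\<lambda>j. exp (\<theta> j)) S (\<lambda>xs. i \<notin> set (take l xs) \<and> i' \<notin> set (take l xs))"
    unfolding PL_event_eq_pl_list_event using assms(2,3)
    by (intro pl_list_event_cong) (simp add: less_pos_ranking_of_list_iff)
  with assms show ?thesis
    using positive_weights.pl_list_event_avoid_pair_ge[OF positive_weights_exp] by simp
qed

lemma PL_event_pos_pair_gt_ge_exp:
  assumes "finite S" "i \<in> S" "i' \<in> S" "i \<noteq> i'" "l \<le> card S - 1" "\<forall>j\<in>S. \<bar>\<theta> j\<bar> \<le> b"
  shows "exp (-4*b) * (real (card S) - real l) * (real (card S) - real l - 1)
           / (real (card S) * (real (card S) - 1)) * (1 - real l / real (card S)) powr (2 * exp (2*b) - 2)
         \<le> PL_event \<theta> S (\<lambda>\<sigma>. l < pos S \<sigma> i \<and> l < pos S \<sigma> i')"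
proof -
  define k where "k = real (card S)"
  define F where "F = (k - real l) * (k - real l - 1) / (k * (k - 1)) * (1 - real l / k) powr (2 * exp (2*b) - 2)"
  have "0 \<le> b" using assms(2,6) by force
  have "2 \<le> card S" using two_le_card assms(1-4) .
  then have "0 \<le> F"
    using assms(5) unfolding F_def k_def by (intro mult_nonneg_nonneg divide_nonneg_nonneg) auto
  then have "exp (-4*b) * F \<le> F" using \<open>0 \<le> b\<close> by (intro mult_left_le_one_le) auto
  also have "F \<le> avoid_pair_bound (exp (2 * b)) k l"
    using \<open>0 \<le> b\<close> \<open>2 \<le> card S\<close> assms(5) unfolding F_def k_def by (intro avoid_pair_bound_ge) auto
  also have "\<dots> \<le> PL_event \<theta> S (\<lambda>\<sigma>. l < pos S \<sigma> i \<and> l < pos S \<sigma> i')"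
    unfolding k_def using assms exp_ratio_le_if_abs_le[OF assms(6)] by (intro PL_event_pos_pair_gt_ge)
  finally show ?thesis unfolding F_def k_def by (simp add: ac_simps)
qed

lemma PL_event_pos_eq_le_exp:
  assumes "finite S" "i \<in> S" "1 \<le> l" "l < card S" "\<forall>j\<in>S. \<bar>\<theta> j\<bar> \<le> b"
  shows "PL_event \<theta> S (\<lambda>\<sigma>. pos S \<sigma> i = l) \<le> exp (6*b) / (real (card S) - real l)"
proof -
  have "0 \<le> b" using assms(2,5) by force
  have "PL_event \<theta> S (\<lambda>\<sigma>. pos S \<sigma> i = l) \<le> exp (2 * b) / (real (card S) - real l + 1)"
    using assms exp_ratio_le_if_abs_le[OF assms(5)] by (intro PL_event_pos_eq_le) auto
  also have "\<dots> \<le> exp (6 * b) / (real (card S) - real l)"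
    using \<open>0 \<le> b\<close> assms(4) by (intro frac_le) auto
  finally show ?thesis by simp
qed

lemma PL_event_pos_eq_pair_le_exp:
  assumes "finite S" "i \<in> S" "i' \<in> S" "i \<noteq> i'" "1 \<le> l1" "l1 < card S" "1 \<le> l2" "l2 < card S"
    and "\<forall>j\<in>S. \<bar>\<theta> j\<bar> \<le> b"
    and nonzero: "(real (card S) - real l1 - 1) * (real (card S) - real l2) \<noteq> 0"
  shows "PL_event \<theta> S (\<lambda>\<sigma>. pos S \<sigma> i = l1 \<and> pos S \<sigma> i' = l2)
           \<le> exp (10*b) / ((real (card S) - real l1 - 1) * (real (card S) - real l2))"
proof -
  define k where "k = real (card S)"
  have "0 \<le> b" using assms(2,9) by force
  have "PL_event \<theta> S (\<lambda>\<sigma>. pos S \<sigma> i = l1 \<and> pos S \<sigma> i' = l2)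
      \<le> exp (2 * b) * exp (2 * b) / ((k - real l1 + 1) * (k - real l2 + 1))"
    unfolding k_def using assms exp_ratio_le_if_abs_le[OF assms(9)] by (intro PL_event_pos_eq_pair_le) auto
  also have "\<dots> \<le> exp (10 * b) / ((k - real l1 - 1) * (k - real l2))"
  proof (rule frac_le)
    have "0 \<le> k - real l1 - 1" "0 \<le> k - real l2" using assms(6,8) unfolding k_def by auto
    then show "0 < (k - real l1 - 1) * (k - real l2)"
      using nonzero unfolding k_def[symmetric] by (simp add: less_le)
    show "(k - real l1 - 1) * (k - real l2) \<le> (k - real l1 + 1) * (k - real l2 + 1)"
      using \<open>0 \<le> k - real l1 - 1\<close> \<open>0 \<le> k - real l2\<close> by (intro mult_mono) auto
  qed (use \<open>0 \<le> b\<close> in \<open>simp_all add: exp_add[symmetric]\<close>)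
  finally show ?thesis unfolding k_def .
qed

theorem lemma4:
  fixes d :: nat and S :: "nat set" and \<theta> :: "nat \<Rightarrow> real" and b :: real
    and i i' l l1 l2 :: nat
  assumes "S \<subseteq> {1..d}" and "card S \<ge> 2"
    and "\<forall>j\<in>{1..d}. \<bar>\<theta> j\<bar> \<le> b"
    and "i \<in> S" and "i' \<in> S" and "i \<noteq> i'"
    and "1 \<le> l" and "l \<le> card S - 1"
    and "1 \<le> l1" and "l1 \<le> card S - 1"
    and "1 \<le> l2" and "l2 \<le> card S - 1"
  shows "(PL_event \<theta> S (\<lambda>\<sigma>. pos S \<sigma> i > l \<and> pos S \<sigma> i' > l)
           \<ge> exp (-4*b) * (real (card S) - real l) * (real (card S) - real l - 1)
               / (real (card S) * (real (card S) - 1))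
             * (1 - real l / real (card S)) powr (2 * exp (2*b) - 2)) \<and>
         (PL_event \<theta> S (\<lambda>\<sigma>. pos S \<sigma> i = l) \<le> exp (6*b) / (real (card S) - real l)) \<and>
         ((real (card S) - real l1 - 1) * (real (card S) - real l2) \<noteq> 0 \<longrightarrow>
           PL_event \<theta> S (\<lambda>\<sigma>. pos S \<sigma> i = l1 \<and> pos S \<sigma> i' = l2)
             \<le> exp (10*b) / ((real (card S) - real l1 - 1) * (real (card S) - real l2)))"
proof -
  have "finite S" using assms(1) finite_subset by blast
  moreover have "\<forall>j\<in>S. \<bar>\<theta> j\<bar> \<le> b" using assms(1,3) by blast
  moreover have "l < card S" "l1 < card S" "l2 < card S" using assms(2,8,10,12) by auto
  ultimately show ?thesis
    using assms(4-12)
    by (intro conjI impI PL_event_pos_pair_gt_ge_exp PL_event_pos_eq_le_exp PL_event_pos_eq_pair_le_exp)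
      auto
qed

end
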